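(* Let $$E=(\{0\}\times[0,1])\cup\bigcup_{n=1}^\infty\Big(\big(\{\tfrac1n\}\times[0,1]\big)\cup\big([\tfrac{1}{2n},\tfrac{1}{2n-1}]\times\{1\}\big)\cup\big([\tfrac{1}{2n+1},\tfrac{1}{2n}]\times\{0\}\big)\Big)\subseteq[0,1]^2.$$ Then $E$ is a connected closed subset of $[0,1]^2$ which is neither arcwise connected nor locally connected, and $E$ is a $B_1$-retract of $[0,1]^2$.
   Context: A function $f:X\to Y$ between topological spaces is a Baire-one function if it is the pointwise limit of a sequence of continuous functions $f_n:X\to Y$. A subset $E$ of $X$ (with the subspace topology) is a $B_1$-retract of $X$ if there exists a Baire-one function $r:X\to E$ with $r(x)=x$ for all $x\in E$. *)

theory Defs
  imports "HOL-Analysis.Analysis"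
begin

definition baire_one_map :: "'a topology \<Rightarrow> 'b topology \<Rightarrow> ('a \<Rightarrow> 'b) \<Rightarrow> bool" where
  "baire_one_map X Y f \<longleftrightarrow>
     (\<exists>g :: nat \<Rightarrow> 'a \<Rightarrow> 'b. (\<forall>n. continuous_map X Y (g n)) \<and>
        (\<forall>x\<in>topspace X. limitin Y (\<lambda>n. g n x) (f x) sequentially))"

definition B1_retract :: "'a set \<Rightarrow> 'a topology \<Rightarrow> bool" where
  "B1_retract E X \<longleftrightarrow> E \<subseteq> topspace X \<and>
     (\<exists>r. baire_one_map X (subtopology X E) r \<and> (\<forall>x\<in>E. r x = x))"

definition arcwise_connected :: "'a::topological_space set \<Rightarrow> bool" where
  "arcwise_connected S \<longleftrightarrow>
     (\<forall>x\<in>S. \<forall>y\<in>S. x \<noteq> y \<longrightarrow>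
        (\<exists>g. arc g \<and> path_image g \<subseteq> S \<and> pathstart g = x \<and> pathfinish g = y))"

definition E_set :: "(real \<times> real) set" where
  "E_set = ({0} \<times> {0..1}) \<union>
     (\<Union>n\<in>{1::nat..}. ({1 / real n} \<times> {0..1})
        \<union> ({1 / (2 * real n) .. 1 / (2 * real n - 1)} \<times> {1})
        \<union> ({1 / (2 * real n + 1) .. 1 / (2 * real n)} \<times> {0}))"

end

theory Submission
  imports Defs
begin

text \<open>
  The set \<open>E\<close> is a "ladder": the left side \<open>{0} \<times> [0,1]\<close> together with, for every
  \<open>k \<ge> 1\<close>, the staple consisting of the two verticals of the cell
  \<open>[1/(k+1), 1/k] \<times> [0,1]\<close> and the rung at height 1 (k odd) or 0 (k even) joining them.

  \<^item> \<open>E\<close> is closed, since away from the left side it is a finite union of staples, and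
    connected, since the staples form a connected chain whose closure contains the left side.
  \<^item> In every neighbourhood of the left side the rungs alternate between heights 0 and 1, so a
    connected subset of \<open>E\<close> which meets the left side and leaves it contains points at heights
    0 and 1.
    This rules out paths from the left side to the rest of \<open>E\<close> (so \<open>E\<close> is not arcwise
    connected) and small connected neighbourhoods of \<open>(0, 1/2)\<close> (so \<open>E\<close> is not locally
    connected).
  \<^item> Each staple is three sides of its cell, an absolute retract, hence a retract of the cell.
    These retractions agree on common sides and glue to a map which is continuous on every
    finite union of cells.  Composing it with the push \<open>x \<mapsto> max x (1/(n+1))\<close> gives
    continuous maps from the square into \<open>E\<close> converging pointwise to a retraction onto \<open>E\<close>
    that is the identity on the left side: \<open>E\<close> is a \<open>B\<^sub>1\<close>-retract of the square.
\<close>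

lemma inverse_nat_antimono: "1 \<le> m \<Longrightarrow> m \<le> n \<Longrightarrow> 1 / real n \<le> 1 / real (m::nat)"
  by (intro divide_left_mono) auto

lemma inverse_nat_strict_antimono: "1 \<le> m \<Longrightarrow> m < n \<Longrightarrow> 1 / real n < 1 / real (m::nat)"
  by (intro divide_strict_left_mono) auto

lemma small_inverse_nat:
  assumes "e > 0" obtains m :: nat where "m \<ge> 1" "1 / real m < e"
proof -
  obtain n :: nat where "n > 0" "inverse (real n) < e" using ex_inverse_of_nat_less[OF assms] by blast
  then show thesis using that[of n] by (simp add: inverse_eq_divide)
qed

lemma UN_odd_even:
  fixes F :: "nat \<Rightarrow> 'a set"
  shows "(\<Union>k\<in>{1..}. F k) = (\<Union>n\<in>{1..}. F (2*n - 1) \<union> F (2*n))"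
proof (intro equalityI subsetI)
  fix x assume "x \<in> (\<Union>k\<in>{1..}. F k)"
  then obtain k where k: "k \<ge> 1" "x \<in> F k" by auto
  show "x \<in> (\<Union>n\<in>{1..}. F (2*n - 1) \<union> F (2*n))"
  proof (cases "odd k")
    case True
    then have "k = 2 * ((k+1) div 2) - 1" "(k+1) div 2 \<ge> 1" by presburger+
    with k show ?thesis by (metis UN_iff UnI1 atLeast_iff)
  next
    case False
    then have "k = 2 * (k div 2)" "k div 2 \<ge> 1" using k by presburger+
    with k show ?thesis by (metis UN_iff UnI2 atLeast_iff)
  qed
qed force

definition rung_height :: "nat \<Rightarrow> real" where
  "rung_height k = (if odd k then 1 else 0)"

lemma rung_height_cases: "rung_height k = 0 \<or> rung_height k = 1"
  unfolding rung_height_def by simp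

definition cell :: "nat \<Rightarrow> (real \<times> real) set" where
  "cell k = {1 / real (k+1) .. 1 / real k} \<times> {0..1}"

definition staple :: "nat \<Rightarrow> (real \<times> real) set" where
  "staple k = ({1 / real k} \<times> {0..1}) \<union> ({1 / real (k+1) .. 1 / real k} \<times> {rung_height k})
     \<union> ({1 / real (k+1)} \<times> {0..1})"

text \<open>The ladder form of \<open>E\<close>; the rungs of the definition are those of the cells \<open>2n-1\<close> and \<open>2n\<close>.\<close>
lemma E_set_staples: "E_set = ({0} \<times> {0..1}) \<union> (\<Union>k\<in>{1..}. staple k)"
proof -
  define vert :: "nat \<Rightarrow> (real \<times> real) set" where "vert k = {1 / real k} \<times> {0..1}" for k
  define rung :: "nat \<Rightarrow> (real \<times> real) set"
    where "rung k = {1 / real (k+1) .. 1 / real k} \<times> {rung_height k}" for k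
  have staples: "(\<Union>k\<in>{1..}. staple k) = (\<Union>k\<in>{1..}. vert k) \<union> (\<Union>k\<in>{1..}. rung k)"
  proof -
    have "staple k = vert k \<union> rung k \<union> vert (k+1)" for k
      unfolding staple_def vert_def rung_def by simp
    moreover have "vert (k+1) \<subseteq> (\<Union>k\<in>{1..}. vert k)" for k by force
    ultimately show ?thesis by (auto 0 3)
  qed
  have "rung (2*n - 1) = {1 / (2 * real n) .. 1 / (2 * real n - 1)} \<times> {1}" if "n \<ge> 1" for n
  proof -
    have "odd (2*n - 1)" "real (2*n - 1) = 2 * real n - 1" "real (2*n - 1 + 1) = 2 * real n"
      using that by (auto simp: of_nat_diff)
    then show ?thesis unfolding rung_def rung_height_def by simp
  qed
  moreover have "rung (2*n) = {1 / (2 * real n + 1) .. 1 / (2 * real n)} \<times> {0}" for n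
    unfolding rung_def rung_height_def by (simp add: add.commute)
  ultimately have "(\<Union>k\<in>{1..}. rung k) = (\<Union>n\<in>{1..}.
       ({1 / (2 * real n) .. 1 / (2 * real n - 1)} \<times> {1}) \<union> ({1 / (2 * real n + 1) .. 1 / (2 * real n)} \<times> {0}))"
    unfolding UN_odd_even[of rung] by (intro SUP_cong) auto
  then show ?thesis
    unfolding E_set_def staples UN_Un_distrib vert_def by (simp add: Un_assoc)
qed

lemma staple_subset_cell: "k \<ge> 1 \<Longrightarrow> staple k \<subseteq> cell k"
  using inverse_nat_antimono[of k "k+1"] rung_height_cases[of k]
  unfolding staple_def cell_def by auto

lemma cell_subset_square: "k \<ge> 1 \<Longrightarrow> cell k \<subseteq> {0..1} \<times> {0..1}"
  unfolding cell_def by (intro Sigma_mono) auto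

lemma cell_subset_positive: assumes "k \<ge> 1" shows "cell k \<subseteq> {0<..1} \<times> {0..1}"
proof
  fix p assume p: "p \<in> cell k"
  have "0 < 1 / real (k+1)" by simp
  also have "\<dots> \<le> fst p" using p unfolding cell_def by (auto simp: mem_Times_iff)
  finally show "p \<in> {0<..1} \<times> {0..1}" using p cell_subset_square[OF assms] by (auto simp: mem_Times_iff)
qed

lemma E_set_subset_square: "E_set \<subseteq> {0..1} \<times> {0..1}"
  unfolding E_set_staples using staple_subset_cell cell_subset_square by fastforce

lemma staple_subset_E_set: "k \<ge> 1 \<Longrightarrow> staple k \<subseteq> E_set"
  unfolding E_set_staples by auto

text \<open>Distinct cells overlap at most in a common vertical side, which belongs to both staples.\<close>
lemma cell_overlap:
  assumes "j \<ge> 1" "k \<ge> 1" "j \<noteq> k"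
  shows "cell j \<inter> cell k \<subseteq> staple j \<inter> staple k"
proof -
  have lt: "cell j \<inter> cell k \<subseteq> staple j \<inter> staple k" if "1 \<le> j" "j < k" for j k
  proof -
    have "1 / real k \<le> 1 / real (j+1)" using that by (intro inverse_nat_antimono) auto
    then show ?thesis unfolding cell_def staple_def by auto
  qed
  show ?thesis
    using assms lt[of j k] lt[of k j] by (cases "j < k") (auto simp: Int_commute)
qed

lemma E_set_Int_cell: assumes "k \<ge> 1" shows "E_set \<inter> cell k = staple k"
proof (intro equalityI subsetI)
  fix p assume p: "p \<in> E_set \<inter> cell k"
  then have "fst p > 0" using cell_subset_positive[OF assms] by (auto simp: mem_Times_iff)
  then obtain j where j: "j \<ge> 1" "p \<in> staple j"
    using p unfolding E_set_staples by auto
  then show "p \<in> staple k"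
    using p staple_subset_cell[of j] cell_overlap[OF j(1) assms] by (cases "j = k") auto
qed (use staple_subset_E_set staple_subset_cell assms in auto)

lemma E_set_between_verticals:
  assumes "k \<ge> 1" "p \<in> E_set" "1 / real (k+1) < fst p" "fst p < 1 / real k"
  shows "snd p = rung_height k"
proof -
  have "p \<in> cell k" using assms E_set_subset_square unfolding cell_def by (auto simp: mem_Times_iff)
  then have "p \<in> staple k" using E_set_Int_cell[OF assms(1)] assms(2) by blast
  then show ?thesis using assms(3,4) unfolding staple_def by auto
qed

lemma closed_by_truncation:
  fixes S C :: "(real \<times> 'b::topological_space) set"
  assumes "closed C" "S \<subseteq> C" "C \<inter> {p. fst p \<le> 0} \<subseteq> S"
    and truncation: "\<And>e. e > 0 \<Longrightarrow> \<exists>F. closed F \<and> F \<subseteq> S \<and> S \<inter> {p. e < fst p} \<subseteq> F"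
  shows "closed S"
proof -
  have "l \<in> S" if l: "l \<in> closure S" for l
  proof (cases "fst l \<le> 0")
    case True
    moreover have "l \<in> C" using l closure_minimal[OF assms(2,1)] by auto
    ultimately show ?thesis using assms(3) by auto
  next
    case False
    define R :: "(real \<times> 'b) set" where "R = {p. fst l / 2 < fst p}"
    obtain F where F: "closed F" "F \<subseteq> S" "S \<inter> R \<subseteq> F"
      using truncation[of "fst l / 2"] False unfolding R_def by auto
    have "open R" unfolding R_def by (intro open_Collect_less continuous_intros)
    have "l \<in> R \<inter> closure S" using False l unfolding R_def by auto
    also have "\<dots> \<subseteq> closure (R \<inter> S)" by (rule open_Int_closure_subset[OF \<open>open R\<close>])
    also have "\<dots> \<subseteq> F" using F by (intro closure_minimal) auto
    finally show ?thesis using F by auto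
  qed
  then show ?thesis using closure_subset_eq by blast
qed

lemma closed_staple: "closed (staple k)"
  unfolding staple_def by (intro closed_Un closed_Times) auto

text \<open>To the right of \<open>1/N\<close>, \<open>E\<close> is covered by the first \<open>N\<close> staples.\<close>
lemma closed_E_set: "closed E_set"
proof (rule closed_by_truncation)
  show "closed ({0..1::real} \<times> {0..1::real})" by (intro closed_Times closed_atLeastAtMost)
  show "E_set \<subseteq> {0..1} \<times> {0..1}" by (rule E_set_subset_square)
  show "({0..1} \<times> {0..1}) \<inter> {p. fst p \<le> 0} \<subseteq> E_set" unfolding E_set_staples by auto
next
  fix e :: real assume "e > 0"
  then obtain N :: nat where "N \<ge> 1" "1 / real N < e" by (rule small_inverse_nat)
  define F where "F = (\<Union>k\<in>{1..N}. staple k)"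
  have "E_set \<inter> {p. e < fst p} \<subseteq> F"
  proof
    fix p assume p: "p \<in> E_set \<inter> {p. e < fst p}"
    then obtain k where k: "k \<ge> 1" "p \<in> staple k"
      using \<open>e > 0\<close> unfolding E_set_staples by auto
    then have "e < 1 / real k" using p staple_subset_cell[OF k(1)] unfolding cell_def by auto
    then have "k \<le> N" using inverse_nat_antimono[of N k] \<open>N \<ge> 1\<close> \<open>1 / real N < e\<close> by linarith
    then show "p \<in> F" unfolding F_def using k by auto
  qed
  moreover have "closed F" unfolding F_def using closed_staple by auto
  moreover have "F \<subseteq> E_set" unfolding F_def using staple_subset_E_set by (intro UN_least) auto
  ultimately show "\<exists>F. closed F \<and> F \<subseteq> E_set \<and> E_set \<inter> {p. e < fst p} \<subseteq> F" by blast
qed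

lemma connected_staple: assumes "k \<ge> 1" shows "connected (staple k)"
proof -
  define right :: "(real \<times> real) set" where "right = {1 / real k} \<times> {0..1}"
  define rung :: "(real \<times> real) set" where "rung = {1 / real (k+1) .. 1 / real k} \<times> {rung_height k}"
  define left :: "(real \<times> real) set" where "left = {1 / real (k+1)} \<times> {0..1}"
  have "1 / real (k+1) \<le> 1 / real k" using assms by (intro inverse_nat_antimono) auto
  then have "(1 / real k, rung_height k) \<in> right \<inter> rung" "(1 / real (k+1), rung_height k) \<in> rung \<inter> left"
    using rung_height_cases[of k] unfolding right_def rung_def left_def by auto
  moreover have "connected right" "connected rung" "connected left"
    unfolding right_def rung_def left_def by (auto intro!: convex_connected convex_Times)
  ultimately have "connected (right \<union> rung \<union> left)"
    by (intro connected_Un) auto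
  then show ?thesis unfolding staple_def right_def rung_def left_def .
qed

text \<open>Consecutive staples share a vertical segment, so their union is connected.\<close>
lemma connected_staples: "connected (\<Union>k\<in>{1..}. staple k)"
proof -
  define A where "A n = (\<Union>k\<in>{1..Suc n}. staple k)" for n
  have "connected (A n)" for n
  proof (induction n)
    case 0 then show ?case unfolding A_def using connected_staple[of 1] by simp
  next
    case (Suc n)
    have step: "A (Suc n) = A n \<union> staple (Suc (Suc n))"
      unfolding A_def by (subst atLeastAtMostSuc_conv) auto
    have "(1 / real (Suc (Suc n)), 0) \<in> A n"
      unfolding A_def by (rule UN_I[of "Suc n"]) (auto simp: staple_def)
    moreover have "(1 / real (Suc (Suc n)), 0) \<in> staple (Suc (Suc n))"
      unfolding staple_def by simp
    ultimately have "A n \<inter> staple (Suc (Suc n)) \<noteq> {}" by blast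
    then show ?case unfolding step using Suc.IH connected_staple[of "Suc (Suc n)"]
      by (intro connected_Un) auto
  qed
  moreover have "(1, 0) \<in> A n" for n
    unfolding A_def by (rule UN_I[of 1]) (auto simp: staple_def)
  ultimately have "connected (\<Union>(range A))" by (intro connected_Union) blast+
  moreover have "\<Union>(range A) = (\<Union>k\<in>{1..}. staple k)"
  proof (intro equalityI subsetI)
    fix p assume "p \<in> (\<Union>k\<in>{1..}. staple k)"
    then obtain k where "k \<ge> 1" "p \<in> staple k" by auto
    then have "p \<in> A (k - 1)" unfolding A_def by (intro UN_I[of k]) auto
    then show "p \<in> \<Union>(range A)" by blast
  qed (auto simp: A_def)
  ultimately show ?thesis by simp
qed

text \<open>The points \<open>(1/n, y)\<close> of the staples converge to every point \<open>(0, y)\<close> of the left side.\<close>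
lemma connected_E_set: "connected E_set"
proof (rule connected_intermediate_closure[OF connected_staples])
  show "(\<Union>k\<in>{1..}. staple k) \<subseteq> E_set" unfolding E_set_staples by (rule Un_upper2)
  have "(0, y) \<in> closure (\<Union>k\<in>{1..}. staple k)" if "0 \<le> y" "y \<le> 1" for y :: real
  proof -
    have "(inverse (real (Suc n)), y) \<in> (\<Union>k\<in>{1..}. staple k)" for n
    proof (rule UN_I[of "Suc n"])
      show "(inverse (real (Suc n)), y) \<in> staple (Suc n)"
        unfolding staple_def using that by (simp add: inverse_eq_divide)
    qed simp
    moreover have "(\<lambda>n. (inverse (real (Suc n)), y)) \<longlonglongrightarrow> (0, y)"
      by (intro tendsto_Pair LIMSEQ_inverse_real_of_nat tendsto_const)
    ultimately show ?thesis unfolding closure_sequential by (intro exI conjI allI)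
  qed
  then have "{0} \<times> {0..1} \<subseteq> closure (\<Union>k\<in>{1..}. staple k)" by auto
  then show "E_set \<subseteq> closure (\<Union>k\<in>{1..}. staple k)"
    unfolding E_set_staples by (rule Un_least[OF _ closure_subset])
qed

lemma connected_reaches_rung:
  assumes "connected C" "C \<subseteq> E_set" "p \<in> C" "fst p = 0" "q \<in> C" "1 / real k \<le> fst q" "k \<ge> 1"
  shows "\<exists>u\<in>C. snd u = rung_height k"
proof -
  define x where "x = (1 / real (k+1) + 1 / real k) / 2"
  have inside: "1 / real (k+1) < x" "x < 1 / real k"
    using inverse_nat_strict_antimono[of k "k+1"] assms(7) unfolding x_def by auto
  have "connected (fst ` C)" using assms(1) by (intro connected_continuous_image continuous_intros)
  moreover have "0 \<in> fst ` C" "fst q \<in> fst ` C" using assms(3,4,5) by force+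
  moreover have "0 \<le> x" "x \<le> fst q" using inside assms(6) by (auto intro: order_trans[of 0 "1 / real (k+1)"])
  ultimately have "x \<in> fst ` C" unfolding connected_iff_interval by blast
  then obtain u where u: "u \<in> C" "fst u = x" by auto
  then have "snd u = rung_height k"
    using E_set_between_verticals[OF assms(7), of u] inside assms(2) by auto
  with u show ?thesis by blast
qed

text \<open>Hence a connected subset of \<open>E\<close> meeting the left side and leaving it cannot lie in a ball of
  radius \<open>1/2\<close>: it meets both a top rung and a bottom rung.  This is the obstruction both to arcs
  and to local connectedness.\<close>
lemma no_small_connected_crossing:
  assumes "connected C" "C \<subseteq> E_set" "C \<subseteq> ball z (1/2)"
    and "p \<in> C" "fst p = 0" "q \<in> C" "fst q \<noteq> 0"
  shows False
proof -
  have "fst q > 0" using assms(2,6,7) E_set_subset_square by (force simp: mem_Times_iff)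
  then obtain N :: nat where "N \<ge> 1" "1 / real N < fst q" by (rule small_inverse_nat)
  define k where "k = 2 * N + 1"
  have "1 / real k \<le> 1 / real N" using \<open>N \<ge> 1\<close> by (intro inverse_nat_antimono) (auto simp: k_def)
  then have "1 / real k \<le> fst q" using \<open>1 / real N < fst q\<close> by linarith
  moreover have "1 / real (k+1) \<le> 1 / real k" by (intro inverse_nat_antimono) (auto simp: k_def)
  ultimately obtain u v where uv: "u \<in> C" "snd u = rung_height k" "v \<in> C" "snd v = rung_height (k+1)"
    using connected_reaches_rung[OF assms(1,2,4,5,6)] by (metis k_def le_add2 order_trans)
  moreover have "rung_height k = 1" "rung_height (k+1) = 0" unfolding k_def rung_height_def by simp_all
  ultimately have "1 \<le> dist u v" using dist_snd_le[of u v] by (simp add: dist_real_def)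
  moreover have "dist u v < 1"
  proof (rule dist_triangle_half_r)
    show "dist z u < 1/2" "dist z v < 1/2" using assms(3) uv(1,3) by auto
  qed
  ultimately show False by simp
qed

text \<open>No path in \<open>E\<close> leaves the left side: right after the last time the path is on the left
  side it would have to oscillate between top and bottom rungs.\<close>
lemma no_path_leaving_left_side:
  assumes g: "path g" "path_image g \<subseteq> E_set"
    and start: "fst (pathstart g) = 0" and finish: "fst (pathfinish g) \<noteq> 0"
  shows False
proof -
  have cont: "continuous_on {0..1} g" using g(1) unfolding path_def .
  define T where "T = {t \<in> {0..1::real}. fst (g t) = 0}"
  have "closed T" unfolding T_def
    by (rule continuous_closed_preimage_constant) (auto intro: continuous_intros cont)
  moreover have "bounded T" by (rule bounded_subset[of "{0..1}"]) (auto simp: T_def)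
  ultimately have "compact T" by (simp add: compact_eq_bounded_closed)
  moreover have "0 \<in> T" using start unfolding T_def pathstart_def by auto
  ultimately obtain t0 where t0: "t0 \<in> T" "\<And>t. t \<in> T \<Longrightarrow> t \<le> t0"
    using compact_attains_sup[of T] by blast
  have "t0 \<noteq> 1" using t0(1) finish unfolding T_def pathfinish_def by auto
  then have t0_range: "0 \<le> t0" "t0 < 1" using t0(1) unfolding T_def by auto
  obtain d where d: "d > 0" "\<And>t. t \<in> {0..1} \<Longrightarrow> dist t t0 < d \<Longrightarrow> dist (g t) (g t0) < 1/2"
    using cont t0_range unfolding continuous_on_iff
    by (metis atLeastAtMost_iff less_eq_real_def zero_less_divide_1_iff zero_less_numeral)
  define t1 where "t1 = min 1 (t0 + d/2)"
  have t1: "t0 < t1" "t1 \<le> 1" using d(1) t0_range unfolding t1_def by auto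
  define C where "C = g ` {t0..t1}"
  have "connected C" unfolding C_def
    by (intro connected_continuous_image continuous_on_subset[OF cont]) (use t0_range t1 in auto)
  moreover have "C \<subseteq> E_set"
    using g(2) t0_range t1 unfolding C_def path_image_def by auto
  moreover have "C \<subseteq> ball (g t0) (1/2)"
  proof
    fix p assume "p \<in> C"
    then obtain t where "t \<in> {t0..t1}" "p = g t" unfolding C_def by auto
    moreover have "dist t t0 < d" using \<open>t \<in> {t0..t1}\<close> d(1) unfolding t1_def dist_real_def by auto
    ultimately have "dist (g t) (g t0) < 1/2" using d(2) t0_range t1 by auto
    then show "p \<in> ball (g t0) (1/2)" using \<open>p = g t\<close> by (simp add: dist_commute)
  qed
  moreover have "g t0 \<in> C" "fst (g t0) = 0" using t0(1) t1 unfolding C_def T_def by auto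
  moreover have "g t1 \<in> C" using t1 unfolding C_def by auto
  moreover have "t1 \<notin> T" using t0(2)[of t1] t1 by linarith
  then have "fst (g t1) \<noteq> 0" using t1 t0_range unfolding T_def by auto
  ultimately show False by (rule no_small_connected_crossing)
qed

lemma E_set_not_arcwise_connected: "\<not> arcwise_connected E_set"
proof
  assume "arcwise_connected E_set"
  moreover have "(0, 0) \<in> E_set" unfolding E_set_staples by auto
  moreover have "(1, 1) \<in> E_set" using staple_subset_E_set[of 1] unfolding staple_def by auto
  ultimately obtain g where "arc g" "path_image g \<subseteq> E_set" "pathstart g = (0, 0)" "pathfinish g = (1, 1)"
    unfolding arcwise_connected_def by (metis zero_neq_one prod.inject)
  then show False using no_path_leaving_left_side arc_imp_path by force
qed

text \<open>Near \<open>(0, 1/2)\<close> there are points of the verticals \<open>{1/m} \<times> [0,1]\<close> which cannot be joined to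
  \<open>(0, 1/2)\<close> by a connected set of small diameter.\<close>
lemma E_set_not_locally_connected: "\<not> locally_connected_space (top_of_set E_set)"
proof
  assume LC: "locally_connected_space (top_of_set E_set)"
  define p :: "real \<times> real" where "p = (0, 1/2)"
  define V where "V = E_set \<inter> ball p (1/2)"
  have "p \<in> E_set" unfolding E_set_staples p_def by auto
  then have "openin (top_of_set E_set) V" "p \<in> V" unfolding V_def by auto
  then obtain U where U: "openin (top_of_set E_set) U" "p \<in> U"
    "\<And>y. y \<in> U \<Longrightarrow> \<exists>C. connectedin (top_of_set E_set) C \<and> C \<subseteq> V \<and> p \<in> C \<and> y \<in> C"
    using LC unfolding locally_connected_space_im_kleinen by meson
  obtain e where e: "e > 0" "\<And>x. x \<in> E_set \<Longrightarrow> dist x p < e \<Longrightarrow> x \<in> U"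
    using U(1,2) unfolding openin_euclidean_subtopology_iff by meson
  obtain m :: nat where "m \<ge> 1" "1 / real m < e" using small_inverse_nat[OF e(1)] by blast
  define q where "q = (1 / real m, 1/2 :: real)"
  have "q \<in> E_set" using staple_subset_E_set[OF \<open>m \<ge> 1\<close>] unfolding q_def staple_def by auto
  moreover have "dist q p < e" using \<open>1 / real m < e\<close> unfolding q_def p_def by (simp add: dist_Pair_Pair)
  ultimately obtain C where C: "connectedin (top_of_set E_set) C" "C \<subseteq> V" "p \<in> C" "q \<in> C"
    using U(3) e(2) by blast
  show False
  proof (rule no_small_connected_crossing)
    show "connected C" "C \<subseteq> E_set" using C(1) by (simp_all add: connectedin_subtopology)
    show "C \<subseteq> ball p (1/2)" using C(2) unfolding V_def by auto
    show "p \<in> C" "fst p = 0" "q \<in> C" "fst q \<noteq> 0" using C(3,4) \<open>m \<ge> 1\<close> unfolding p_def q_def by auto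
  qed
qed

text \<open>Three sides of a rectangle form a retract of it: they are a union of convex sets glued along
  points, hence an absolute retract.\<close>
lemma three_sides_retract_of_rectangle:
  fixes a b c d h :: real
  assumes "a < b" "c \<le> h" "h \<le> d"
  shows "({b} \<times> {c..d} \<union> {a..b} \<times> {h} \<union> {a} \<times> {c..d}) retract_of ({a..b} \<times> {c..d})"
proof (rule AR_imp_retract, intro conjI)
  have AR_box: "AR (I \<times> J)" if "convex I" "convex J" "I \<noteq> {}" "J \<noteq> {}" for I J :: "real set"
    using that by (intro convex_imp_AR convex_Times) auto
  have "{b} \<times> {c..d} \<inter> {a..b} \<times> {h} = {(b, h)}"
    "({b} \<times> {c..d} \<union> {a..b} \<times> {h}) \<inter> {a} \<times> {c..d} = {(a, h)}" using assms by auto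
  then show "AR ({b} \<times> {c..d} \<union> {a..b} \<times> {h} \<union> {a} \<times> {c..d})"
    using assms by (intro AR_closed_Un closed_Un closed_Times AR_box) (auto simp: AR_singleton)
  show "closedin (top_of_set ({a..b} \<times> {c..d})) ({b} \<times> {c..d} \<union> {a..b} \<times> {h} \<union> {a} \<times> {c..d})"
    using assms by (intro closed_subset closed_Un closed_Times) auto
qed

lemma staple_retract_of_cell: "k \<ge> 1 \<Longrightarrow> staple k retract_of cell k"
  unfolding staple_def cell_def using rung_height_cases[of k] inverse_nat_strict_antimono[of k "k+1"]
  by (intro three_sides_retract_of_rectangle) auto

definition cell_retraction :: "nat \<Rightarrow> real \<times> real \<Rightarrow> real \<times> real" where
  "cell_retraction k = (SOME r. retraction (cell k) (staple k) r)"

lemma retraction_cell_retraction: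
  "k \<ge> 1 \<Longrightarrow> retraction (cell k) (staple k) (cell_retraction k)"
  unfolding cell_retraction_def using staple_retract_of_cell[of k] unfolding retract_of_def
  by (rule someI_ex)

text \<open>The index of the cell whose interior or right side contains the abscissa \<open>x \<in> (0,1]\<close>.\<close>
definition cell_index :: "real \<Rightarrow> nat" where
  "cell_index x = nat \<lfloor>1 / x\<rfloor>"

lemma cell_index_bounds:
  assumes "0 < x" "x \<le> 1"
  shows "cell_index x \<ge> 1" "1 / real (cell_index x + 1) < x" "x \<le> 1 / real (cell_index x)"
proof -
  have "1 \<le> 1 / x" using assms by (simp add: field_simps)
  then have floor: "real (cell_index x) \<le> 1 / x" "1 / x < real (cell_index x) + 1" "1 \<le> \<lfloor>1 / x\<rfloor>"
    unfolding cell_index_def by linarith+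
  then show "cell_index x \<ge> 1" unfolding cell_index_def by linarith
  then show "x \<le> 1 / real (cell_index x)" "1 / real (cell_index x + 1) < x"
    using floor(1,2) assms(1) by (simp_all add: field_simps)
qed

lemma cell_of_cell_index:
  assumes "p \<in> {0<..1} \<times> {0..1}"
  shows "cell_index (fst p) \<ge> 1" "p \<in> cell (cell_index (fst p))"
  using assms cell_index_bounds[of "fst p"] unfolding cell_def by (auto simp: mem_Times_iff)

text \<open>Gluing the cell retractions: on the cell \<open>k\<close> the glued map agrees with the \<open>k\<close>-th
  retraction, because on common sides of two cells both retractions are the identity.\<close>
definition ladder_retraction :: "real \<times> real \<Rightarrow> real \<times> real" where
  "ladder_retraction p = cell_retraction (cell_index (fst p)) p"

lemma ladder_retraction_on_cell:
  assumes k: "k \<ge> 1" and p: "p \<in> cell k"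
  shows "ladder_retraction p = cell_retraction k p"
proof -
  define j where "j = cell_index (fst p)"
  have j: "j \<ge> 1" "p \<in> cell j"
    using cell_of_cell_index p cell_subset_positive[OF k] unfolding j_def by blast+
  show ?thesis
  proof (cases "j = k")
    case False
    then have "p \<in> staple j" "p \<in> staple k" using cell_overlap[OF j(1) k] j(2) p by auto
    then show ?thesis using retraction_cell_retraction[OF j(1)] retraction_cell_retraction[OF k]
      unfolding ladder_retraction_def j_def[symmetric] retraction_def by simp
  qed (simp add: ladder_retraction_def j_def)
qed

lemma ladder_retraction_in_staple:
  assumes k: "k \<ge> 1" and p: "p \<in> cell k"
  shows "ladder_retraction p \<in> staple k"
proof -
  have "cell_retraction k ` cell k \<subseteq> staple k"
    using retraction_cell_retraction[OF k] by (simp add: retraction_def image_subset_iff_funcset)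
  then show ?thesis using ladder_retraction_on_cell[OF k p] p by auto
qed

lemma continuous_ladder_retraction: "continuous_on (\<Union>k\<in>{1..N}. cell k) ladder_retraction"
proof (rule continuous_on_closed_Union)
  fix k assume "k \<in> {1..N}"
  then have k: "k \<ge> 1" by simp
  have "continuous_on (cell k) (cell_retraction k)"
    using retraction_cell_retraction[OF k] by (simp add: retraction_def)
  moreover have "continuous_on (cell k) (cell_retraction k) \<longleftrightarrow> continuous_on (cell k) ladder_retraction"
    using ladder_retraction_on_cell[OF k] by (intro continuous_on_cong) auto
  ultimately show "continuous_on (cell k) ladder_retraction" by simp
  show "closed (cell k)" unfolding cell_def by (intro closed_Times closed_atLeastAtMost)
qed simp

lemma ladder_retraction_fixes_E_set:
  assumes "p \<in> E_set" "fst p \<noteq> 0"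
  shows "ladder_retraction p = p"
proof -
  have "p \<in> {0<..1} \<times> {0..1}" using assms E_set_subset_square by (auto simp: mem_Times_iff)
  then obtain k where k: "k \<ge> 1" "p \<in> cell k" using cell_of_cell_index by blast
  then have "p \<in> staple k" using E_set_Int_cell assms(1) by blast
  then show ?thesis using ladder_retraction_on_cell[OF k] retraction_cell_retraction[OF k(1)]
    unfolding retraction_def by simp
qed

lemma ladder_retraction_into_E_set:
  assumes "p \<in> {0<..1} \<times> {0..1}"
  shows "ladder_retraction p \<in> E_set"
  using cell_of_cell_index[OF assms] ladder_retraction_in_staple staple_subset_E_set by blast

text \<open>The continuous approximants: push the square to the right of the line \<open>x = 1/(n+1)\<close>, which
  is covered by finitely many cells, and apply the glued retraction.\<close>
definition approximant :: "nat \<Rightarrow> real \<times> real \<Rightarrow> real \<times> real" where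
  "approximant n p = ladder_retraction (max (fst p) (1 / real (Suc n)), snd p)"

lemma continuous_map_approximant:
  "continuous_map (top_of_set ({0..1} \<times> {0..1})) (top_of_set E_set) (approximant n)"
proof -
  define push :: "real \<times> real \<Rightarrow> real \<times> real" where "push p = (max (fst p) (1 / real (Suc n)), snd p)" for p
  have push_range: "push p \<in> {0<..1} \<times> {0..1}" if "p \<in> {0..1} \<times> {0..1}" for p
    using that unfolding push_def by (auto simp: mem_Times_iff less_max_iff_disj)
  have push_into_cells: "push p \<in> (\<Union>k\<in>{1..Suc n}. cell k)" if "p \<in> {0..1} \<times> {0..1}" for p
  proof -
    define k where "k = cell_index (fst (push p))"
    have k: "k \<ge> 1" "push p \<in> cell k" using cell_of_cell_index[OF push_range[OF that]] unfolding k_def by auto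
    have "\<not> Suc n < k"
    proof
      assume "Suc n < k"
      then have "1 / real k < 1 / real (Suc n)" by (intro inverse_nat_strict_antimono) auto
      moreover have "fst (push p) \<le> 1 / real k" using k(2) unfolding cell_def by (auto simp: mem_Times_iff)
      ultimately show False unfolding push_def by simp
    qed
    with k show ?thesis by auto
  qed
  have "continuous_on ({0..1} \<times> {0..1}) (ladder_retraction \<circ> push)"
  proof (rule continuous_on_compose)
    show "continuous_on ({0..1} \<times> {0..1}) push" unfolding push_def by (intro continuous_intros)
    show "continuous_on (push ` ({0..1} \<times> {0..1})) ladder_retraction"
      using push_into_cells by (blast intro: continuous_on_subset[OF continuous_ladder_retraction])
  qed
  moreover have "ladder_retraction (push p) \<in> E_set" if "p \<in> {0..1} \<times> {0..1}" for p
    using ladder_retraction_into_E_set[OF push_range[OF that]] .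
  ultimately show ?thesis unfolding approximant_def push_def[symmetric] by (auto simp: o_def)
qed

definition ladder_B1_retraction :: "real \<times> real \<Rightarrow> real \<times> real" where
  "ladder_B1_retraction p = (if fst p = 0 then p else ladder_retraction p)"

text \<open>The approximants converge pointwise: on the left side they run down the verticals
  \<open>x = 1/(n+1)\<close>, elsewhere they are eventually constant.\<close>
lemma approximant_tendsto:
  assumes p: "p \<in> {0..1} \<times> {0..1}"
  shows "(\<lambda>n. approximant n p) \<longlonglongrightarrow> ladder_B1_retraction p"
proof (cases "fst p = 0")
  case True
  have approx: "approximant n p = (inverse (real (Suc n)), snd p)" for n
  proof -
    have "(1 / real (Suc n), snd p) \<in> staple (Suc n)" using p unfolding staple_def by (auto simp: mem_Times_iff)
    then have "(1 / real (Suc n), snd p) \<in> E_set" using staple_subset_E_set[of "Suc n"] by auto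
    then show ?thesis using True ladder_retraction_fixes_E_set[of "(1 / real (Suc n), snd p)"]
      unfolding approximant_def by (simp add: inverse_eq_divide)
  qed
  have "(\<lambda>n. (inverse (real (Suc n)), snd p)) \<longlonglongrightarrow> (0, snd p)"
    by (intro tendsto_Pair LIMSEQ_inverse_real_of_nat tendsto_const)
  moreover have "ladder_B1_retraction p = (0, snd p)"
    using True unfolding ladder_B1_retraction_def by (simp add: prod_eq_iff)
  ultimately show ?thesis unfolding approx by simp
next
  case False
  then have "fst p > 0" using p by (auto simp: mem_Times_iff)
  then obtain N :: nat where N: "N \<ge> 1" "1 / real N < fst p" by (rule small_inverse_nat)
  have "approximant n p = ladder_retraction p" if "n \<ge> N" for n
  proof -
    have "1 / real (Suc n) \<le> 1 / real N" using N(1) that by (intro inverse_nat_antimono) auto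
    then show ?thesis using N(2) unfolding approximant_def by simp
  qed
  then have "\<forall>\<^sub>F n in sequentially. approximant n p = ladder_retraction p"
    unfolding eventually_sequentially by blast
  then show ?thesis using False unfolding ladder_B1_retraction_def by (simp add: tendsto_eventually)
qed

lemma B1_retract_E_set: "B1_retract E_set (top_of_set ({0..1} \<times> {0..1}))"
  unfolding B1_retract_def baire_one_map_def
proof (intro conjI exI[of _ ladder_B1_retraction] exI[of _ approximant] allI ballI)
  have square: "subtopology (top_of_set ({0..1} \<times> {0..1})) E_set = top_of_set E_set"
    using E_set_subset_square by (simp add: subtopology_subtopology Int_absorb1)
  show "E_set \<subseteq> topspace (top_of_set ({0..1} \<times> {0..1}))" using E_set_subset_square by simp
  fix n show "continuous_map (top_of_set ({0..1} \<times> {0..1}))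
      (subtopology (top_of_set ({0..1} \<times> {0..1})) E_set) (approximant n)"
    unfolding square by (rule continuous_map_approximant)
next
  fix p assume "p \<in> topspace (top_of_set ({0..1::real} \<times> {0..1::real}))"
  then have p: "p \<in> {0..1} \<times> {0..1}" by simp
  have "ladder_B1_retraction p \<in> E_set"
    using p ladder_retraction_into_E_set[of p] unfolding ladder_B1_retraction_def E_set_staples
    by (auto simp: mem_Times_iff)
  moreover have "approximant n p \<in> E_set" for n
    using continuous_map_approximant[of n] p by (auto dest: continuous_map_image_subset_topspace)
  ultimately show "limitin (subtopology (top_of_set ({0..1} \<times> {0..1})) E_set)
      (\<lambda>n. approximant n p) (ladder_B1_retraction p) sequentially"
    using approximant_tendsto[OF p] E_set_subset_square
    by (simp add: subtopology_subtopology Int_absorb1 limitin_subtopology)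
next
  fix p assume "p \<in> E_set"
  then show "ladder_B1_retraction p = p"
    unfolding ladder_B1_retraction_def using ladder_retraction_fixes_E_set by simp
qed

theorem mainTheorem8:
  shows "E_set \<subseteq> {0..1} \<times> {0..1} \<and> closed E_set \<and> connected E_set
    \<and> \<not> arcwise_connected E_set
    \<and> \<not> locally_connected_space (subtopology euclidean E_set)
    \<and> B1_retract E_set (subtopology euclidean ({0..1} \<times> {0..1}))"
  using E_set_subset_square closed_E_set connected_E_set E_set_not_arcwise_connected
    E_set_not_locally_connected B1_retract_E_set by blast

end
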